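(* Let $F$ be a recurrent set and let $X\subset F$ be a bifix code of finite $F$-degree $d$. Then for every $w\in F$, $\delta_X(w)=\min\{d,\delta_{K(X)}(w)\}$. In particular, $X$ is determined by its $F$-degree and its kernel.
   Context: $A$ is a finite alphabet. $F\subset A^*$ is recurrent if it is nonempty, closed under factors, and for all $u,w\in F$ there is $v\in F$ with $uvw\in F$. A bifix code is a set of nonempty words none of which is a proper prefix or proper suffix of another. For a set $Y$, a parse of $w$ with respect to $Y$ is a triple $(v,y,u)$ with $w=vyu$, $v\in A^*\setminus A^*Y$, $y\in Y^*$, $u\in A^*\setminus YA^*$; $\delta_Y(w)$ is the number of parses, and $d_F(X)=\max_{w\in F}\delta_X(w)$. The kernel is $K(X)=\{x\in X\mid A^+xA^+\cap X\ne\emptyset\}$. *)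

theory Defs
  imports Main "HOL-Library.Extended_Nat"
begin

definition factorial :: "'a list set \<Rightarrow> bool" where
  "factorial F \<longleftrightarrow> (\<forall>w\<in>F. \<forall>p v s. w = p @ v @ s \<longrightarrow> v \<in> F)"

definition recurrent :: "'a list set \<Rightarrow> bool" where
  "recurrent F \<longleftrightarrow> F \<noteq> {} \<and> factorial F \<and>
     (\<forall>u\<in>F. \<forall>w\<in>F. \<exists>v\<in>F. u @ v @ w \<in> F)"

definition bifix_code :: "'a list set \<Rightarrow> bool" where
  "bifix_code X \<longleftrightarrow> [] \<notin> X \<and>
     (\<forall>x\<in>X. \<forall>y\<in>X. \<forall>z. y = x @ z \<longrightarrow> z = []) \<and>
     (\<forall>x\<in>X. \<forall>y\<in>X. \<forall>z. y = z @ x \<longrightarrow> z = [])"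

definition kstar :: "'a list set \<Rightarrow> 'a list set" where
  "kstar Y = {concat ys | ys. set ys \<subseteq> Y}"

text \<open>A^*Y (words having a suffix in Y) and YA^* (words having a prefix in Y).\<close>
definition suffix_in :: "'a list set \<Rightarrow> 'a list set" where
  "suffix_in Y = {s @ y | s y. y \<in> Y}"

definition prefix_in :: "'a list set \<Rightarrow> 'a list set" where
  "prefix_in Y = {y @ s | y s. y \<in> Y}"

definition parses :: "'a list set \<Rightarrow> 'a list \<Rightarrow> ('a list \<times> 'a list \<times> 'a list) set" where
  "parses Y w = {(v, y, u). w = v @ y @ u \<and> v \<notin> suffix_in Y \<and> y \<in> kstar Y \<and> u \<notin> prefix_in Y}"

definition delta :: "'a list set \<Rightarrow> 'a list \<Rightarrow> nat" where
  "delta Y w = card (parses Y w)"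

definition degree :: "'a list set \<Rightarrow> 'a list set \<Rightarrow> enat" where
  "degree F X = (SUP w\<in>F. enat (delta X w))"

definition kernel :: "'a list set \<Rightarrow> 'a list set" where
  "kernel X = {x \<in> X. \<exists>p s. p \<noteq> [] \<and> s \<noteq> [] \<and> p @ x @ s \<in> X}"

end

theory Submission
  imports Defs
begin

(*
  Plan.  (1) For a suffix code X every word t factors uniquely as t = v y with
  v \<notin> A*X and y \<in> X*.  Hence the parses of w correspond to the positions j of w
  whose suffix drop j w is not in XA*, so delta_X(w) counts these positions.  This
  gives the recursion delta_X(a u) = delta_X(u) + [a u \<notin> XA*] and, by reversal,
  delta_X(u a) = delta_X(u) + [u a \<notin> A*X] for prefix codes; delta_X is thus
  monotone under extension, and antitone in the code.
  (2) If w is an internal factor of some word of X, the positions of w see only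
  words of the kernel, so delta_X(w) = delta_K(X)(w) \<le> d.
  (3) Otherwise, embedding w between two copies of a word w0 of maximal delta
  (recurrence) forces every extension of w inside the embedding to end in A*X,
  whence delta_X(w) = d \<le> delta_K(X)(w).
  (4) Equal delta on the factorial set F determines XA* \<inter> F, hence the prefix code X.
*)

definition prefix_code :: "'a list set \<Rightarrow> bool" where
  "prefix_code X \<longleftrightarrow> [] \<notin> X \<and> (\<forall>x\<in>X. \<forall>y\<in>X. \<forall>z. y = x @ z \<longrightarrow> z = [])"

definition suffix_code :: "'a list set \<Rightarrow> bool" where
  "suffix_code X \<longleftrightarrow> [] \<notin> X \<and> (\<forall>x\<in>X. \<forall>y\<in>X. \<forall>z. y = z @ x \<longrightarrow> z = [])"

lemma bifix_code_iff: "bifix_code X \<longleftrightarrow> prefix_code X \<and> suffix_code X"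
  unfolding bifix_code_def prefix_code_def suffix_code_def by blast

lemma suffix_code_subset: "suffix_code X \<Longrightarrow> Y \<subseteq> X \<Longrightarrow> suffix_code Y"
  unfolding suffix_code_def by blast

lemma suffix_code_rev:
  assumes "prefix_code X" shows "suffix_code (rev ` X)"
  unfolding suffix_code_def
proof (intro conjI ballI allI impI)
  show "[] \<notin> rev ` X" using assms unfolding prefix_code_def by auto
next
  fix x y z assume "x \<in> rev ` X" "y \<in> rev ` X" "y = z @ x"
  then obtain x0 y0 where "x0 \<in> X" "y0 \<in> X" "x = rev x0" "y = rev y0" by blast
  then have "rev y = rev x @ rev z" "rev x \<in> X" "rev y \<in> X"
    using \<open>y = z @ x\<close> by (metis rev_append rev_rev_ident)+
  then have "rev z = []" using assms unfolding prefix_code_def by blast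
  then show "z = []" by simp
qed

lemma suffix_code_cancel:
  assumes code: "suffix_code X" and "x \<in> X" "x' \<in> X" and eq: "s @ x = s' @ x'"
  shows "s = s' \<and> x = x'"
proof -
  have uniq: "\<And>u. u \<in> X \<Longrightarrow> u' \<in> X \<Longrightarrow> u' = z @ u \<Longrightarrow> z = []" for u' z
    using code unfolding suffix_code_def by blast
  from eq obtain us where "s = s' @ us \<and> us @ x = x' \<or> s @ us = s' \<and> x = us @ x'"
    by (auto simp: append_eq_append_conv2)
  then show ?thesis using uniq assms(2,3) by fastforce
qed

lemma in_suffix_in: "x \<in> X \<Longrightarrow> s @ x \<in> suffix_in X"
  unfolding suffix_in_def by blast

lemma kstar_Nil: "[] \<in> kstar X"
  unfolding kstar_def by (auto intro: exI[of _ "[]"])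

lemma kstar_snoc:
  assumes "y \<in> kstar X" "x \<in> X" shows "y @ x \<in> kstar X"
proof -
  obtain ys where "y = concat ys" "set ys \<subseteq> X" using assms(1) unfolding kstar_def by auto
  then show ?thesis unfolding kstar_def using assms(2) by (auto intro!: exI[of _ "ys @ [x]"])
qed

lemma kstar_cases:
  assumes "y \<in> kstar X"
  obtains "y = []" | y' x where "y' \<in> kstar X" "x \<in> X" "y = y' @ x"
proof -
  obtain ys where ys: "y = concat ys" "set ys \<subseteq> X" using assms unfolding kstar_def by auto
  show thesis
  proof (cases ys rule: rev_cases)
    case Nil then show ?thesis using ys that(1) by simp
  next
    case (snoc zs z)
    then have "concat zs \<in> kstar X" using ys unfolding kstar_def by auto
    then show ?thesis using ys snoc that(2) by auto
  qed
qed

text \<open>Existence: strip trailing code words as long as possible (needs [] \<notin> X).\<close>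
lemma left_factorisation_exists:
  assumes "[] \<notin> X"
  shows "\<exists>v y. t = v @ y \<and> v \<notin> suffix_in X \<and> y \<in> kstar X"
proof (induction "length t" arbitrary: t rule: less_induct)
  case less
  show ?case
  proof (cases "t \<in> suffix_in X")
    case False then show ?thesis using kstar_Nil by (metis append_Nil2)
  next
    case True
    then obtain s x where sx: "t = s @ x" "x \<in> X" unfolding suffix_in_def by auto
    with assms have "length s < length t" by (cases x) auto
    then obtain v y where "s = v @ y" "v \<notin> suffix_in X" "y \<in> kstar X" using less by blast
    then show ?thesis using sx kstar_snoc by (metis append.assoc)
  qed
qed

text \<open>Uniqueness: the last code words of both factorisations coincide by
  suffix_code_cancel, and v \<notin> A*X rules out one factorisation being longer.\<close>
lemma left_factorisation_unique:
  assumes code: "suffix_code X"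
  shows "v @ y = v' @ y' \<Longrightarrow> v \<notin> suffix_in X \<Longrightarrow> y \<in> kstar X \<Longrightarrow>
         v' \<notin> suffix_in X \<Longrightarrow> y' \<in> kstar X \<Longrightarrow> v = v' \<and> y = y'"
proof (induction "length (v @ y)" arbitrary: v y v' y' rule: less_induct)
  case less
  from \<open>y \<in> kstar X\<close> show ?case
  proof (cases rule: kstar_cases)
    case 1
    from \<open>y' \<in> kstar X\<close> show ?thesis
    proof (cases rule: kstar_cases)
      case 1 then show ?thesis using less.prems \<open>y = []\<close> by simp
    next
      case (2 y1 x1)
      then have "v = (v' @ y1) @ x1" using less.prems \<open>y = []\<close> by simp
      then show ?thesis using in_suffix_in[OF \<open>x1 \<in> X\<close>] less.prems(2) by blast
    qed
  next
    case (2 y1 x1)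
    from \<open>y' \<in> kstar X\<close> show ?thesis
    proof (cases rule: kstar_cases)
      case 1
      then have "v' = (v @ y1) @ x1" using less.prems \<open>y = y1 @ x1\<close> by simp
      then show ?thesis using in_suffix_in[OF \<open>x1 \<in> X\<close>] less.prems(4) by blast
    next
      case (2 y1' x1')
      have "(v @ y1) @ x1 = (v' @ y1') @ x1'" using less.prems \<open>y = y1 @ x1\<close> 2 by simp
      then have same: "v @ y1 = v' @ y1'" "x1 = x1'"
        using suffix_code_cancel[OF code \<open>x1 \<in> X\<close> \<open>x1' \<in> X\<close>] by blast+
      have "x1 \<noteq> []" using code \<open>x1 \<in> X\<close> unfolding suffix_code_def by blast
      then have "length (v @ y1) < length (v @ y)" using \<open>y = y1 @ x1\<close> by simp
      then have "v = v' \<and> y1 = y1'"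
        using less.hyps same(1) less.prems(2,4) \<open>y1 \<in> kstar X\<close> \<open>y1' \<in> kstar X\<close> by blast
      then show ?thesis using \<open>y = y1 @ x1\<close> 2 same(2) by simp
    qed
  qed
qed

definition positions :: "'a list set \<Rightarrow> 'a list \<Rightarrow> nat set" where
  "positions X w = {j. j \<le> length w \<and> drop j w \<notin> prefix_in X}"

lemma finite_positions: "finite (positions X w)"
  unfolding positions_def by (rule finite_subset[of _ "{..length w}"]) auto

lemma parse_determined_by_position:
  assumes code: "suffix_code X"
    and p: "(v, y, u) \<in> parses X w" and p': "(v', y', u') \<in> parses X w"
    and pos: "length v + length y = length v' + length y'"
  shows "v = v' \<and> y = y' \<and> u = u'"
proof -
  have w: "w = (v @ y) @ u" "w = (v' @ y') @ u'" using p p' unfolding parses_def by auto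
  then have "u = u'" using pos by (metis append_eq_append_conv length_append)
  then have "v @ y = v' @ y'" using w by simp
  then show ?thesis
    using left_factorisation_unique[OF code] p p' \<open>u = u'\<close> unfolding parses_def by blast
qed

lemma delta_eq_card_positions:
  assumes code: "suffix_code X"
  shows "delta X w = card (positions X w)"
proof -
  define pos where "pos = (\<lambda>(v::'a list, y::'a list, u::'a list). length v + length y)"
  have "inj_on pos (parses X w)"
    unfolding inj_on_def pos_def using parse_determined_by_position[OF code] by fast
  moreover have "pos ` parses X w = positions X w"
  proof
    show "pos ` parses X w \<subseteq> positions X w"
      unfolding parses_def positions_def pos_def by auto
  next
    show "positions X w \<subseteq> pos ` parses X w"
    proof
      fix j assume j: "j \<in> positions X w"
      have "[] \<notin> X" using code unfolding suffix_code_def by blast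
      then obtain v y where vy: "take j w = v @ y" "v \<notin> suffix_in X" "y \<in> kstar X"
        using left_factorisation_exists by blast
      have "w = v @ y @ drop j w" using vy(1) by (metis append.assoc append_take_drop_id)
      then have "(v, y, drop j w) \<in> parses X w" using vy j unfolding parses_def positions_def by simp
      moreover have "pos (v, y, drop j w) = j"
        using j arg_cong[OF vy(1), of length] unfolding positions_def pos_def by simp
      ultimately show "j \<in> pos ` parses X w" by force
    qed
  qed
  ultimately show ?thesis unfolding delta_def by (metis card_image)
qed

lemma positions_Cons:
  "positions X (a # u) = (if a # u \<in> prefix_in X then {} else {0}) \<union> Suc ` positions X u"
proof (rule set_eqI)
  fix j show "j \<in> positions X (a # u) \<longleftrightarrow>
      j \<in> (if a # u \<in> prefix_in X then {} else {0}) \<union> Suc ` positions X u"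
    unfolding positions_def by (cases j) auto
qed

lemma delta_Cons:
  assumes "suffix_code X"
  shows "delta X (a # u) = delta X u + (if a # u \<in> prefix_in X then 0 else 1)"
proof -
  let ?new = "if a # u \<in> prefix_in X then {} else {0::nat}"
  have "card (positions X (a # u)) = card ?new + card (Suc ` positions X u)"
    unfolding positions_Cons by (rule card_Un_disjoint) (auto simp: finite_positions)
  then have "card (positions X (a # u)) = (if a # u \<in> prefix_in X then 0 else 1) + card (positions X u)"
    by (simp add: card_image)
  then show ?thesis using delta_eq_card_positions[OF assms] by simp
qed

lemma rev_in_prefix_in: "rev u \<in> prefix_in (rev ` X) \<longleftrightarrow> u \<in> suffix_in X"
proof
  assume "rev u \<in> prefix_in (rev ` X)"
  then obtain x s where "rev u = rev x @ s" "x \<in> X" unfolding prefix_in_def by blast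
  then have "u = rev s @ x" by (metis rev_append rev_rev_ident)
  then show "u \<in> suffix_in X" unfolding suffix_in_def using \<open>x \<in> X\<close> by blast
next
  assume "u \<in> suffix_in X"
  then obtain s x where "u = s @ x" "x \<in> X" unfolding suffix_in_def by blast
  then show "rev u \<in> prefix_in (rev ` X)" unfolding prefix_in_def by auto
qed

lemma rev_in_suffix_in: "rev u \<in> suffix_in (rev ` X) \<longleftrightarrow> u \<in> prefix_in X"
proof
  assume "rev u \<in> suffix_in (rev ` X)"
  then obtain x s where "rev u = s @ rev x" "x \<in> X" unfolding suffix_in_def by blast
  then have "u = x @ rev s" by (metis rev_append rev_rev_ident)
  then show "u \<in> prefix_in X" unfolding prefix_in_def using \<open>x \<in> X\<close> by blast
next
  assume "u \<in> prefix_in X"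
  then obtain x s where "u = x @ s" "x \<in> X" unfolding prefix_in_def by blast
  then show "rev u \<in> suffix_in (rev ` X)" unfolding suffix_in_def by auto
qed

lemma rev_in_kstar: "y \<in> kstar X \<Longrightarrow> rev y \<in> kstar (rev ` X)"
proof -
  assume "y \<in> kstar X"
  then obtain ys where ys: "y = concat ys" "set ys \<subseteq> X" unfolding kstar_def by auto
  then have "rev y = concat (rev (map rev ys))" "set (rev (map rev ys)) \<subseteq> rev ` X"
    by (auto simp: rev_concat rev_map)
  then show ?thesis unfolding kstar_def by blast
qed

lemma rev_in_parses:
  "(v, y, u) \<in> parses X w \<Longrightarrow> (rev u, rev y, rev v) \<in> parses (rev ` X) (rev w)"
  unfolding parses_def by (auto simp: rev_in_prefix_in rev_in_suffix_in rev_in_kstar)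

lemma delta_rev: "delta (rev ` X) (rev w) = delta X w"
proof -
  define rev3 where "rev3 = (\<lambda>(v::'a list, y::'a list, u::'a list). (rev u, rev y, rev v))"
  have rev3_rev3: "rev3 (rev3 p) = p" for p unfolding rev3_def by (cases p) auto
  have sub: "rev3 ` parses Y t \<subseteq> parses (rev ` Y) (rev t)" for Y and t :: "'a list"
    unfolding rev3_def using rev_in_parses by fast
  have "parses (rev ` X) (rev w) \<subseteq> rev3 ` parses X w"
  proof
    fix p assume "p \<in> parses (rev ` X) (rev w)"
    then have "rev3 p \<in> parses (rev ` rev ` X) (rev (rev w))" using sub by blast
    then have "rev3 p \<in> parses X w" by (simp add: image_image)
    then show "p \<in> rev3 ` parses X w" by (metis image_eqI rev3_rev3)
  qed
  then have "parses (rev ` X) (rev w) = rev3 ` parses X w" using sub by blast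
  moreover have "inj_on rev3 (parses X w)" by (metis inj_onI rev3_rev3)
  ultimately show ?thesis unfolding delta_def by (simp add: card_image)
qed

lemma delta_snoc:
  assumes "prefix_code X"
  shows "delta X (u @ [a]) = delta X u + (if u @ [a] \<in> suffix_in X then 0 else 1)"
proof -
  have "delta X (u @ [a]) = delta (rev ` X) (a # rev u)" using delta_rev[of X "u @ [a]"] by simp
  also have "\<dots> = delta (rev ` X) (rev u) + (if a # rev u \<in> prefix_in (rev ` X) then 0 else 1)"
    using delta_Cons[OF suffix_code_rev[OF assms]] by simp
  finally show ?thesis using delta_rev[of X u] rev_in_prefix_in[of "u @ [a]" X] by simp
qed

lemma delta_prepend_mono:
  assumes "suffix_code X" shows "delta X s \<le> delta X (t @ s)"
  by (induction t) (auto simp: delta_Cons[OF assms] intro: le_trans)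

lemma delta_append_mono:
  assumes "prefix_code X" shows "delta X u \<le> delta X (u @ t)"
proof (induction t rule: rev_induct)
  case (snoc a t)
  then show ?case using delta_snoc[OF assms, of "u @ t" a] by simp
qed simp

lemma delta_append_eq_iff:
  assumes code: "prefix_code X"
  shows "delta X (u @ t) = delta X u \<longleftrightarrow>
         (\<forall>k. 0 < k \<and> k \<le> length t \<longrightarrow> u @ take k t \<in> suffix_in X)"
proof (induction t rule: rev_induct)
  case Nil then show ?case by simp
next
  case (snoc a t)
  have stages: "(\<forall>k. 0 < k \<and> k \<le> length (t @ [a]) \<longrightarrow> u @ take k (t @ [a]) \<in> suffix_in X) \<longleftrightarrow>
      (\<forall>k. 0 < k \<and> k \<le> length t \<longrightarrow> u @ take k t \<in> suffix_in X) \<and> u @ t @ [a] \<in> suffix_in X"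
    by (auto simp: le_Suc_eq)
  have "delta X (u @ t @ [a]) = delta X (u @ t) + (if (u @ t) @ [a] \<in> suffix_in X then 0 else 1)"
    using delta_snoc[OF code, of "u @ t" a] by simp
  then show ?case using stages snoc.IH delta_append_mono[OF code, of u t] by auto
qed

definition internal_factor :: "'a list set \<Rightarrow> 'a list \<Rightarrow> bool" where
  "internal_factor X w \<longleftrightarrow> (\<exists>p s. p \<noteq> [] \<and> s \<noteq> [] \<and> p @ w @ s \<in> X)"

lemma kernel_subset: "kernel X \<subseteq> X"
  unfolding kernel_def by blast

lemma delta_antitone:
  assumes code: "suffix_code X" and "Y \<subseteq> X"
  shows "delta X w \<le> delta Y w"
proof -
  have "positions X w \<subseteq> positions Y w"
    using \<open>Y \<subseteq> X\<close> unfolding positions_def prefix_in_def by blast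
  moreover have "suffix_code Y" using suffix_code_subset[OF code \<open>Y \<subseteq> X\<close>] .
  ultimately show ?thesis
    by (simp add: delta_eq_card_positions[OF code] delta_eq_card_positions card_mono finite_positions)
qed

text \<open>On an internal factor of a code word, only kernel words can start a suffix,
  so X and its kernel have the same parses count.\<close>
lemma delta_kernel_if_internal:
  assumes code: "suffix_code X" and "internal_factor X w"
  shows "delta X w = delta (kernel X) w"
proof -
  obtain p s where ps: "p \<noteq> []" "s \<noteq> []" "p @ w @ s \<in> X"
    using \<open>internal_factor X w\<close> unfolding internal_factor_def by blast
  have "drop j w \<in> prefix_in X \<longleftrightarrow> drop j w \<in> prefix_in (kernel X)" for j
  proof
    assume "drop j w \<in> prefix_in X"
    then obtain x r where xr: "drop j w = x @ r" "x \<in> X" unfolding prefix_in_def by blast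
    have "p @ w @ s = (p @ take j w) @ x @ (r @ s)"
      using xr(1) by (metis append.assoc append_take_drop_id)
    then have "(p @ take j w) @ x @ (r @ s) \<in> X" using ps(3) by metis
    moreover have "p @ take j w \<noteq> []" "r @ s \<noteq> []" using ps(1,2) by simp_all
    ultimately have "x \<in> kernel X" using xr(2) unfolding kernel_def by blast
    then show "drop j w \<in> prefix_in (kernel X)" using xr(1) unfolding prefix_in_def by blast
  next
    assume "drop j w \<in> prefix_in (kernel X)"
    then show "drop j w \<in> prefix_in X" using kernel_subset unfolding prefix_in_def by blast
  qed
  then have "positions X w = positions (kernel X) w" unfolding positions_def by blast
  moreover have "suffix_code (kernel X)" using suffix_code_subset[OF code kernel_subset] .
  ultimately show ?thesis by (simp add: delta_eq_card_positions[OF code] delta_eq_card_positions)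
qed

lemma suffix_in_if_not_internal:
  assumes "p @ w @ r \<in> suffix_in X" and "r \<noteq> []" and "\<not> internal_factor X w"
  shows "w @ r \<in> suffix_in X"
proof -
  obtain s x where sx: "p @ (w @ r) = s @ x" "x \<in> X" using assms(1) unfolding suffix_in_def by blast
  then obtain us where "p = s @ us \<and> us @ (w @ r) = x \<or> p @ us = s \<and> w @ r = us @ x"
    using append_eq_append_conv2[of p "w @ r" s x] by blast
  then show ?thesis
  proof
    assume "p = s @ us \<and> us @ (w @ r) = x"
    then have "us @ w @ r \<in> X" using sx(2) by simp
    moreover from this have "us = []" using assms(2,3) unfolding internal_factor_def by blast
    ultimately show ?thesis using in_suffix_in[of "w @ r" X "[]"] by simp
  next
    assume "p @ us = s \<and> w @ r = us @ x"
    then show ?thesis using in_suffix_in[OF sx(2), of us] by simp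
  qed
qed

lemma delta_le_degree:
  assumes "degree F X = enat d" and "w \<in> F"
  shows "delta X w \<le> d"
proof -
  have "enat (delta X w) \<le> degree F X" unfolding degree_def using assms(2) by (rule SUP_upper)
  then show ?thesis using assms(1) by simp
qed

lemma degree_attained:
  assumes deg: "degree F X = enat d" and "F \<noteq> {}"
  obtains w where "w \<in> F" "delta X w = d"
proof (rule ccontr)
  assume "\<not> thesis"
  then have less: "\<forall>w\<in>F. delta X w < d" using delta_le_degree[OF deg] that by (meson le_neq_implies_less)
  then have "d > 0" using \<open>F \<noteq> {}\<close> by fastforce
  have "degree F X \<le> enat (d - 1)" unfolding degree_def by (rule SUP_least) (use less in force)
  then show False using deg \<open>d > 0\<close> by simp
qed

text \<open>Put w between two copies of a word w0 of maximal delta, w0 v1 w v2 w0 \<in> F.  Right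
  extensions of w0 inside this word keep delta maximal, so each of them ends with a code word;
  as w is no internal factor, so does each right extension of w by a prefix of v2 w0.  Hence
  delta_X(w) = delta_X(w v2 w0) \<ge> delta_X(w0) = d.\<close>
lemma delta_eq_degree_if_not_internal:
  assumes rec: "recurrent F" and code: "bifix_code X" and deg: "degree F X = enat d"
    and "w \<in> F" and not_internal: "\<not> internal_factor X w"
  shows "delta X w = d"
proof -
  have pcode: "prefix_code X" and scode: "suffix_code X" using code bifix_code_iff by blast+
  have "F \<noteq> {}" and join: "\<forall>u\<in>F. \<forall>w\<in>F. \<exists>v\<in>F. u @ v @ w \<in> F"
    using rec unfolding recurrent_def by auto
  obtain w0 where "w0 \<in> F" and w0_max: "delta X w0 = d" using degree_attained[OF deg \<open>F \<noteq> {}\<close>] .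
  obtain v1 where "w0 @ v1 @ w \<in> F" using join \<open>w0 \<in> F\<close> \<open>w \<in> F\<close> by blast
  then obtain v2 where "(w0 @ v1 @ w) @ v2 @ w0 \<in> F" using join \<open>w0 \<in> F\<close> by blast
  define R where "R = v2 @ w0"
  have "w0 @ (v1 @ w @ R) \<in> F" using \<open>(w0 @ v1 @ w) @ v2 @ w0 \<in> F\<close> unfolding R_def by simp
  then have "delta X (w0 @ (v1 @ w @ R)) = delta X w0"
    using delta_le_degree[OF deg] delta_append_mono[OF pcode, of w0] w0_max by (metis le_antisym)
  then have w0_ext: "\<forall>k. 0 < k \<and> k \<le> length (v1 @ w @ R) \<longrightarrow> w0 @ take k (v1 @ w @ R) \<in> suffix_in X"
    using delta_append_eq_iff[OF pcode] by blast
  have "\<forall>k. 0 < k \<and> k \<le> length R \<longrightarrow> w @ take k R \<in> suffix_in X"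
  proof (intro allI impI)
    fix k assume k: "0 < k \<and> k \<le> length R"
    have "take (length (v1 @ w) + k) (v1 @ w @ R) = v1 @ w @ take k R" by simp
    then have "(w0 @ v1) @ w @ take k R \<in> suffix_in X"
      using w0_ext[rule_format, of "length (v1 @ w) + k"] k by simp
    moreover have "take k R \<noteq> []" using k by auto
    ultimately show "w @ take k R \<in> suffix_in X" using suffix_in_if_not_internal not_internal by blast
  qed
  then have "delta X (w @ R) = delta X w" using delta_append_eq_iff[OF pcode] by blast
  moreover have "d \<le> delta X (w @ R)"
    using delta_prepend_mono[OF scode, of w0 "w @ v2"] w0_max unfolding R_def by simp
  ultimately show ?thesis using delta_le_degree[OF deg \<open>w \<in> F\<close>] by simp
qed

text \<open>The formula delta_X(w) = min(d, delta_K(X)(w)): on internal factors delta_X agrees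
  with delta_K(X) and is at most d, elsewhere it equals d and is at most delta_K(X).\<close>
lemma delta_eq_min_kernel:
  assumes rec: "recurrent F" and code: "bifix_code X" and deg: "degree F X = enat d" and "w \<in> F"
  shows "delta X w = min d (delta (kernel X) w)"
proof (cases "internal_factor X w")
  case True
  then show ?thesis
    using delta_kernel_if_internal delta_le_degree[OF deg \<open>w \<in> F\<close>] code bifix_code_iff by force
next
  case False
  then have "delta X w = d" using delta_eq_degree_if_not_internal[OF rec code deg \<open>w \<in> F\<close>] by blast
  moreover have "delta X w \<le> delta (kernel X) w"
    using delta_antitone[OF _ kernel_subset] code bifix_code_iff by blast
  ultimately show ?thesis by simp
qed

lemma factorial_factor: "factorial F \<Longrightarrow> p @ v @ s \<in> F \<Longrightarrow> v \<in> F"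
  unfolding factorial_def by blast

lemma prefix_in_eq_if_delta_eq:
  assumes "suffix_code X" "suffix_code Y" "factorial F"
    and delta_eq: "\<forall>w\<in>F. delta X w = delta Y w" and "a # u \<in> F"
  shows "a # u \<in> prefix_in X \<longleftrightarrow> a # u \<in> prefix_in Y"
proof -
  have "u \<in> F" using factorial_factor[OF \<open>factorial F\<close>, of "[a]" u "[]"] \<open>a # u \<in> F\<close> by simp
  then show ?thesis
    using delta_eq \<open>a # u \<in> F\<close> delta_Cons[OF assms(1), of a u] delta_Cons[OF assms(2), of a u]
    by (auto split: if_splits)
qed

text \<open>Two prefix codes X and Y coincide as soon as each word of X \<union> Y lies in XA*
  iff it lies in YA*: a word of X then starts with a word of Y, which starts with a
  word of X, and the prefix property forces all three to be equal.\<close>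
lemma prefix_code_eqI:
  assumes "prefix_code X" "prefix_code Y"
    and same: "\<forall>w \<in> X \<union> Y. w \<in> prefix_in X \<longleftrightarrow> w \<in> prefix_in Y"
  shows "X = Y"
proof -
  have self: "x \<in> prefix_in Z" if "x \<in> Z" for x and Z :: "'a list set"
    using that unfolding prefix_in_def by force
  have sub: "A \<subseteq> B" if code: "prefix_code A" and same_AB: "\<forall>w \<in> A \<union> B. w \<in> prefix_in A \<longleftrightarrow> w \<in> prefix_in B"
    for A B :: "'a list set"
  proof
    fix x assume "x \<in> A"
    then have "x \<in> prefix_in B" using same_AB self by blast
    then obtain y s where ys: "x = y @ s" "y \<in> B" unfolding prefix_in_def by blast
    then have "y \<in> prefix_in A" using same_AB self by blast
    then obtain x' s' where x's': "y = x' @ s'" "x' \<in> A" unfolding prefix_in_def by blast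
    then have "x = x' @ (s' @ s)" using ys(1) by simp
    then have "s' @ s = []" using code \<open>x \<in> A\<close> \<open>x' \<in> A\<close> unfolding prefix_code_def by blast
    then show "x \<in> B" using ys by simp
  qed
  show ?thesis using sub[OF assms(1)] sub[OF assms(2)] same by blast
qed

lemma bifix_code_eq_if_delta_eq:
  assumes "factorial F" and "X \<subseteq> F" "Y \<subseteq> F" and "bifix_code X" "bifix_code Y"
    and delta_eq: "\<forall>w\<in>F. delta X w = delta Y w"
  shows "X = Y"
proof -
  have codes: "prefix_code X" "suffix_code X" "prefix_code Y" "suffix_code Y"
    using assms(4,5) bifix_code_iff by blast+
  have "w \<in> prefix_in X \<longleftrightarrow> w \<in> prefix_in Y" if "w \<in> X \<union> Y" for w
  proof -
    have "w \<in> F" using that assms(2,3) by blast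
    moreover have "w \<noteq> []" using that codes(2,4) unfolding suffix_code_def by blast
    ultimately obtain a u where "w = a # u" "a # u \<in> F" by (cases w) auto
    then show ?thesis using prefix_in_eq_if_delta_eq[OF codes(2,4) \<open>factorial F\<close> delta_eq] by simp
  qed
  then show ?thesis using prefix_code_eqI[OF codes(1,3)] by blast
qed

theorem mainTheorem7:
  fixes F X :: "('a::finite) list set" and d :: nat
  assumes "recurrent F" and "X \<subseteq> F" and "bifix_code X"
    and "degree F X = enat d"
  shows "(\<forall>w\<in>F. delta X w = min d (delta (kernel X) w)) \<and>
         (\<forall>Y. Y \<subseteq> F \<and> bifix_code Y \<and> degree F Y = enat d \<and> kernel Y = kernel X \<longrightarrow> Y = X)"
proof (intro conjI allI impI)
  show formula: "\<forall>w\<in>F. delta X w = min d (delta (kernel X) w)"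
    using delta_eq_min_kernel[OF assms(1,3,4)] by blast
  fix Y assume Y: "Y \<subseteq> F \<and> bifix_code Y \<and> degree F Y = enat d \<and> kernel Y = kernel X"
  then have "\<forall>w\<in>F. delta Y w = delta X w"
    using formula delta_eq_min_kernel[OF assms(1), of Y d] by auto
  moreover have "factorial F" using assms(1) unfolding recurrent_def by blast
  ultimately show "Y = X" using bifix_code_eq_if_delta_eq assms(2,3) Y by blast
qed

end
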